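(* Let $f\colon\mathbb{R}^n\to\mathbb{R}$ be continuous. Suppose there is $\gamma>0$ such that (i) the set $S_\gamma=\{z\in\mathbb{R}^n : f(z)\le \inf f+\gamma\}$ is compact, and (ii) every $x\in S_\gamma$ with $0\in\partial f(x)$ is a global minimizer of $f$. Let the Moreau Adaptive Descent (MAD) parameters $x^1\in\mathbb{R}^n$, $\alpha$, $t_1,\tau,T\in(0,\infty)$, $\eta_-\in(0,1)$, $\eta_+>1$, $\theta\in(0,1)$, $\delta>0$ and an initial vector $g^0\in\mathbb{R}^n$ satisfy: $\alpha\in(1-\sqrt{\eta_-},\,1+\sqrt{\eta_-})$, and there is a global minimizer $x^\star$ of $f$ such that $t_1\ge\tau$ and $T\ge t_1\ge \|x^\star-x^1\|^2/(2\gamma)$. Let $\{x^k\}$ be generated by MAD (described in the context), with any choice of $\hat x^k\in\operatorname{prox}_{t_kf}(x^k)$ at each step. Then $$\lim_{k\to\infty} f(x^k)=\min_{x\in\mathbb{R}^n} f(x),$$ and some subsequence $\{x^{n_k}\}\subseteq\{x^k\}$ converges to a global minimizer of $f$.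
   Context: For $t>0$, $\operatorname{prox}_{tf}(x)=\operatorname{argmin}_{z\in\mathbb{R}^n}\big(f(z)+\frac{1}{2t}\|z-x\|^2\big)$ (a set) and the Moreau envelope is $u(x,t)=\inf_{z\in\mathbb{R}^n}\big(f(z)+\frac{1}{2t}\|z-x\|^2\big)$. The subdifferential $\partial f(\bar x)$ is the set of all $v\in\mathbb{R}^n$ such that $f(x)\ge f(\bar x)+\langle v,x-\bar x\rangle+o(\|x-\bar x\|)$ as $x\to\bar x$. MAD: for $k=1,2,\dots$: choose $\hat x^k\in\operatorname{prox}_{t_kf}(x^k)$; set $g^k=(x^k-\hat x^k)/t_k$; set $x^{k+1}=x^k-\alpha t_k g^k$; set $t_{k+1}=\min(\eta_+t_k,T)$ if $\|g^k\|\le\theta\|g^{k-1}\|+\delta$, and $t_{k+1}=\max(\eta_-t_k,\tau)$ otherwise. *)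

theory Defs
  imports "HOL-Analysis.Analysis"
begin

definition prox :: "real \<Rightarrow> ('a::euclidean_space \<Rightarrow> real) \<Rightarrow> 'a \<Rightarrow> 'a set" where
  "prox t f x = {z. \<forall>w. f z + (1 / (2 * t)) * (norm (z - x))\<^sup>2 \<le> f w + (1 / (2 * t)) * (norm (w - x))\<^sup>2}"

definition subdiff :: "('a::euclidean_space \<Rightarrow> real) \<Rightarrow> 'a \<Rightarrow> 'a set" where
  "subdiff f xb = {v. \<forall>\<epsilon>>0. \<exists>d>0. \<forall>y. norm (y - xb) < d \<longrightarrow>
       f y \<ge> f xb + inner v (y - xb) - \<epsilon> * norm (y - xb)}"

definition global_min :: "('a \<Rightarrow> real) \<Rightarrow> 'a \<Rightarrow> bool" where
  "global_min f z \<longleftrightarrow> (\<forall>w. f z \<le> f w)"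

text \<open>MAD iteration, indices k = 1, 2, ...; g 0 is the initial vector.\<close>
definition MAD_seq ::
  "('a::euclidean_space \<Rightarrow> real) \<Rightarrow> real \<Rightarrow> real \<Rightarrow> real \<Rightarrow> real \<Rightarrow> real \<Rightarrow> real \<Rightarrow> real
   \<Rightarrow> (nat \<Rightarrow> 'a) \<Rightarrow> (nat \<Rightarrow> 'a) \<Rightarrow> (nat \<Rightarrow> 'a) \<Rightarrow> (nat \<Rightarrow> real) \<Rightarrow> bool" where
  "MAD_seq f \<alpha> \<tau> T \<eta>m \<eta>p \<theta> \<delta> x xh g t \<longleftrightarrow>
     (\<forall>k\<ge>1. xh k \<in> prox (t k) f (x k)
        \<and> g k = (1 / t k) *\<^sub>R (x k - xh k)
        \<and> x (Suc k) = x k - (\<alpha> * t k) *\<^sub>R g k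
        \<and> t (Suc k) = (if norm (g k) \<le> \<theta> * norm (g (k - 1)) + \<delta>
                       then min (\<eta>p * t k) T else max (\<eta>m * t k) \<tau>))"

end

theory Submission
  imports Defs
begin

(* The values u_k = f xh_k + |xh_k - x_k|^2 / (2 t_k) of the Moreau envelope along the iteration
   form a Lyapunov sequence. Testing the prox problem of step k+1 with the previous prox point
   xh_k, and using xh_k - x_(k+1) = (1 - alpha) (xh_k - x_k) and t_(k+1) >= eta_- t_k, gives
     u_(k+1) + (1 - (1 - alpha)^2 / eta_-) |xh_k - x_k|^2 / (2 t_k) <= u_k,
   so the residuals xh_k - x_k tend to 0, while u_1 <= min f + gamma (test with the minimizer
   x_star) keeps every prox point in the compact sublevel set S_gamma. A limit z of prox points
   along a subsequence satisfies f z <= f w + |w - z|^2 / (2 tau) for all w, so 0 is a subgradient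
   at z and z is a global minimizer; the iterates converge to the same z. As every subsequence of
   (x_k) has such a further subsequence, f x_k tends to min f. *)


lemma subsubseq_LIMSEQ_imp_LIMSEQ:
  fixes X :: "nat \<Rightarrow> 'a::topological_space"
  assumes "\<And>r :: nat \<Rightarrow> nat. strict_mono r \<Longrightarrow>
      \<exists>r' :: nat \<Rightarrow> nat. strict_mono r' \<and> (\<lambda>k. X (r (r' k))) \<longlonglongrightarrow> L"
  shows "X \<longlonglongrightarrow> L"
proof (rule topological_tendstoI, rule ccontr)
  fix U
  assume U: "open U" "L \<in> U" and "\<not> (\<forall>\<^sub>F k in sequentially. X k \<in> U)"
  then have "\<exists>\<^sub>F k in cofinite. X k \<notin> U"
    by (simp add: not_eventually cofinite_eq_sequentially)
  then have "infinite {k. X k \<notin> U}"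
    by (simp add: frequently_cofinite)
  then obtain r :: "nat \<Rightarrow> nat" where r: "strict_mono r" "\<And>k. X (r k) \<notin> U"
    using infinite_enumerate by blast
  obtain r' where "(\<lambda>k. X (r (r' k))) \<longlonglongrightarrow> L"
    using assms[OF r(1)] by blast
  then have "\<forall>\<^sub>F k in sequentially. X (r (r' k)) \<in> U"
    using U by (rule topological_tendstoD)
  then show False
    using r(2) by simp
qed

lemma global_min_Inf:
  assumes "global_min f z"
  shows "Inf (range f) = f z"
  using assms unfolding global_min_def by (intro cInf_eq_minimum) auto

lemma prox_le_perturbed:
  fixes f :: "'a::euclidean_space \<Rightarrow> real"
  assumes "h \<in> prox t f x" "0 < \<tau>" "\<tau> \<le> t"
  shows "f h \<le> f w + ((norm (w - h))\<^sup>2 + 2 * norm (w - h) * norm (h - x)) / (2 * \<tau>)"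
proof -
  have "f h + (norm (h - x))\<^sup>2 / (2 * t) \<le> f w + (norm (w - x))\<^sup>2 / (2 * t)"
    using assms(1) unfolding prox_def by simp
  moreover have "(norm (w - x))\<^sup>2 = (norm (w - h))\<^sup>2 + 2 * inner (w - h) (h - x) + (norm (h - x))\<^sup>2"
  proof -
    have "w - x = (w - h) + (h - x)"
      by simp
    then show ?thesis
      by (simp only: power2_norm_eq_inner inner_add_left inner_add_right inner_commute)
  qed
  ultimately have "f h \<le> f w + ((norm (w - h))\<^sup>2 + 2 * inner (w - h) (h - x)) / (2 * t)"
    by (simp add: add_divide_distrib)
  also have "\<dots> \<le> f w + ((norm (w - h))\<^sup>2 + 2 * norm (w - h) * norm (h - x)) / (2 * t)"
    using assms norm_cauchy_schwarz[of "w - h" "h - x"] by (intro add_left_mono divide_right_mono) auto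
  also have "\<dots> \<le> f w + ((norm (w - h))\<^sup>2 + 2 * norm (w - h) * norm (h - x)) / (2 * \<tau>)"
    using assms by (intro add_left_mono divide_left_mono) auto
  finally show ?thesis .
qed

lemma subdiff_zero_if_quadratic_minorant:
  fixes f :: "'a::euclidean_space \<Rightarrow> real"
  assumes "0 < \<tau>" "\<And>w. f z \<le> f w + (norm (w - z))\<^sup>2 / (2 * \<tau>)"
  shows "0 \<in> subdiff f z"
  unfolding subdiff_def
proof (intro CollectI allI impI)
  fix \<epsilon> :: real
  assume "0 < \<epsilon>"
  show "\<exists>d>0. \<forall>y. norm (y - z) < d \<longrightarrow> f z + inner 0 (y - z) - \<epsilon> * norm (y - z) \<le> f y"
  proof (intro exI[of _ "2 * \<tau> * \<epsilon>"] conjI allI impI)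
    show "0 < 2 * \<tau> * \<epsilon>"
      using assms(1) \<open>0 < \<epsilon>\<close> by simp
    fix y
    assume "norm (y - z) < 2 * \<tau> * \<epsilon>"
    then have "norm (y - z) * norm (y - z) \<le> norm (y - z) * (2 * \<tau> * \<epsilon>)"
      by (intro mult_left_mono) auto
    then have "(norm (y - z))\<^sup>2 / (2 * \<tau>) \<le> \<epsilon> * norm (y - z)"
      using assms(1) by (simp add: field_simps power2_eq_square)
    then show "f z + inner 0 (y - z) - \<epsilon> * norm (y - z) \<le> f y"
      using assms(2)[of y] by simp
  qed
qed

lemma prox_limit_subdiff_zero:
  fixes f :: "'a::euclidean_space \<Rightarrow> real"
  assumes cont: "continuous_on UNIV f" and "0 < \<tau>"
    and prox: "\<And>k. h k \<in> prox (t k) f (y k)" "\<And>k. \<tau> \<le> t k"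
    and lim: "h \<longlonglongrightarrow> z" "(\<lambda>k. h k - y k) \<longlonglongrightarrow> 0"
  shows "0 \<in> subdiff f z"
proof (rule subdiff_zero_if_quadratic_minorant[OF \<open>0 < \<tau>\<close>])
  fix w
  have "(\<lambda>k. f (h k)) \<longlonglongrightarrow> f z"
    using lim(1) by (rule continuous_on_tendsto_compose[OF cont]) auto
  moreover have "(\<lambda>k. f w + ((norm (w - h k))\<^sup>2 + 2 * norm (w - h k) * norm (h k - y k)) / (2 * \<tau>))
      \<longlonglongrightarrow> f w + ((norm (w - z))\<^sup>2 + 2 * norm (w - z) * 0) / (2 * \<tau>)"
    using lim \<open>0 < \<tau>\<close> by (intro tendsto_intros) (auto simp: tendsto_norm_zero_iff)
  ultimately have "f z \<le> f w + ((norm (w - z))\<^sup>2 + 2 * norm (w - z) * 0) / (2 * \<tau>)"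
    using prox_le_perturbed[OF prox(1) \<open>0 < \<tau>\<close> prox(2)] by (intro LIMSEQ_le) auto
  then show "f z \<le> f w + (norm (w - z))\<^sup>2 / (2 * \<tau>)"
    by simp
qed

lemma prox_relaxed_step:
  fixes f :: "'a::euclidean_space \<Rightarrow> real"
  assumes "h' \<in> prox t' f x'" "x' = x - \<alpha> *\<^sub>R (x - h)"
  shows "f h' + (norm (h' - x'))\<^sup>2 / (2 * t') \<le> f h + (1 - \<alpha>)\<^sup>2 * (norm (h - x))\<^sup>2 / (2 * t')"
proof -
  have "h - x' = (1 - \<alpha>) *\<^sub>R (h - x)"
    using assms(2) by (simp add: algebra_simps)
  then have "(norm (h - x'))\<^sup>2 = (1 - \<alpha>)\<^sup>2 * (norm (h - x))\<^sup>2"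
    by (simp add: power_mult_distrib)
  moreover have "f h' + (1 / (2 * t')) * (norm (h' - x'))\<^sup>2 \<le> f h + (1 / (2 * t')) * (norm (h - x'))\<^sup>2"
    using assms(1) unfolding prox_def by blast
  ultimately show ?thesis
    by simp
qed

locale MAD_run =
  fixes f :: "'a::euclidean_space \<Rightarrow> real"
    and \<alpha> \<tau> T \<eta>m \<eta>p \<theta> \<delta> :: real
    and x xh g :: "nat \<Rightarrow> 'a" and t :: "nat \<Rightarrow> real"
  assumes mad: "MAD_seq f \<alpha> \<tau> T \<eta>m \<eta>p \<theta> \<delta> x xh g t"
    and tau_pos: "0 < \<tau>"
    and etam: "0 < \<eta>m" "\<eta>m < 1"
    and etap: "1 < \<eta>p"
    and t1: "\<tau> \<le> t 1" "t 1 \<le> T"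
    and alpha: "1 - sqrt \<eta>m < \<alpha>" "\<alpha> < 1 + sqrt \<eta>m"
begin

(* MAD_seq constrains only the indices k >= 1, hence the Suc k throughout. *)
lemma MAD_step:
  "xh (Suc k) \<in> prox (t (Suc k)) f (x (Suc k))"
  "g (Suc k) = (1 / t (Suc k)) *\<^sub>R (x (Suc k) - xh (Suc k))"
  "x (Suc (Suc k)) = x (Suc k) - (\<alpha> * t (Suc k)) *\<^sub>R g (Suc k)"
  "t (Suc (Suc k)) = (if norm (g (Suc k)) \<le> \<theta> * norm (g k) + \<delta>
                       then min (\<eta>p * t (Suc k)) T else max (\<eta>m * t (Suc k)) \<tau>)"
proof -
  have "1 \<le> Suc k"
    by simp
  note step = mad[unfolded MAD_seq_def, rule_format, OF this, unfolded diff_Suc_1]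
  show "xh (Suc k) \<in> prox (t (Suc k)) f (x (Suc k))"
    using step by blast
  show "g (Suc k) = (1 / t (Suc k)) *\<^sub>R (x (Suc k) - xh (Suc k))"
    using step by blast
  show "x (Suc (Suc k)) = x (Suc k) - (\<alpha> * t (Suc k)) *\<^sub>R g (Suc k)"
    using step by blast
  show "t (Suc (Suc k)) = (if norm (g (Suc k)) \<le> \<theta> * norm (g k) + \<delta>
                       then min (\<eta>p * t (Suc k)) T else max (\<eta>m * t (Suc k)) \<tau>)"
    using step by blast
qed

lemma step_size_bounds: "\<tau> \<le> t (Suc k)" "t (Suc k) \<le> T"
proof (induction k)
  case 0
  show "\<tau> \<le> t (Suc 0)" "t (Suc 0) \<le> T"
    using t1 by simp_all
next
  case (Suc k)
  have "0 < t (Suc k)"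
    using Suc.IH(1) tau_pos by linarith
  then have "\<eta>m * t (Suc k) \<le> t (Suc k)" "t (Suc k) \<le> \<eta>p * t (Suc k)"
    using etam etap by simp_all
  then show "\<tau> \<le> t (Suc (Suc k))" "t (Suc (Suc k)) \<le> T"
    unfolding MAD_step(4)[of k] using Suc.IH by auto
qed

lemma step_size_pos: "0 < t (Suc k)"
  using step_size_bounds(1) tau_pos by (rule order.strict_trans2[rotated])

lemma step_size_ratio: "\<eta>m * t (Suc k) \<le> t (Suc (Suc k))"
proof -
  have "\<eta>m * t (Suc k) \<le> t (Suc k)" "t (Suc k) \<le> \<eta>p * t (Suc k)"
    using etam etap step_size_pos[of k] by simp_all
  then show ?thesis
    unfolding MAD_step(4)[of k] using step_size_bounds(2)[of k] by auto
qed

lemma iterate_relaxation: "x (Suc (Suc k)) = x (Suc k) - \<alpha> *\<^sub>R (x (Suc k) - xh (Suc k))"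
  using MAD_step(2,3)[of k] step_size_pos[of k] by simp

definition envelope :: "nat \<Rightarrow> real" where
  "envelope k = f (xh k) + (norm (xh k - x k))\<^sup>2 / (2 * t k)"

definition descent_rate :: real where
  "descent_rate = 1 - (1 - \<alpha>)\<^sup>2 / \<eta>m"

lemma descent_rate_pos: "0 < descent_rate"
proof -
  have "\<bar>1 - \<alpha>\<bar> < sqrt \<eta>m"
    using alpha by linarith
  then have "\<bar>1 - \<alpha>\<bar>\<^sup>2 < (sqrt \<eta>m)\<^sup>2"
    by (intro power_strict_mono) auto
  then show ?thesis
    using etam by (simp add: descent_rate_def)
qed

lemma envelope_descent:
  "envelope (Suc (Suc k)) + descent_rate * ((norm (xh (Suc k) - x (Suc k)))\<^sup>2 / (2 * t (Suc k)))
     \<le> envelope (Suc k)"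
proof -
  let ?D = "(norm (xh (Suc k) - x (Suc k)))\<^sup>2"
  have "envelope (Suc (Suc k)) \<le> f (xh (Suc k)) + (1 - \<alpha>)\<^sup>2 * ?D / (2 * t (Suc (Suc k)))"
    unfolding envelope_def using MAD_step(1) iterate_relaxation by (rule prox_relaxed_step)
  also have "\<dots> \<le> f (xh (Suc k)) + (1 - \<alpha>)\<^sup>2 * ?D / (2 * (\<eta>m * t (Suc k)))"
    using step_size_ratio[of k] step_size_pos[of k] step_size_pos[of "Suc k"] etam
    by (intro add_left_mono divide_left_mono) auto
  also have "\<dots> = envelope (Suc k) - descent_rate * (?D / (2 * t (Suc k)))"
    using etam step_size_pos[of k] unfolding envelope_def descent_rate_def by (simp add: field_simps)
  finally show ?thesis
    by simp
qed

lemma envelope_decseq: "decseq (\<lambda>k. envelope (Suc k))"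
proof (rule decseq_SucI)
  fix k
  have "0 \<le> descent_rate * ((norm (xh (Suc k) - x (Suc k)))\<^sup>2 / (2 * t (Suc k)))"
    using descent_rate_pos step_size_pos[of k] by simp
  then show "envelope (Suc (Suc k)) \<le> envelope (Suc k)"
    using envelope_descent[of k] by linarith
qed

lemma envelope_le_prox_objective:
  "envelope (Suc k) \<le> f w + (norm (w - x (Suc k)))\<^sup>2 / (2 * t (Suc k))"
  using MAD_step(1)[of k] unfolding envelope_def prox_def by simp

lemma prox_value_le_envelope: "f (xh (Suc k)) \<le> envelope (Suc k)"
  unfolding envelope_def using step_size_pos[of k] by simp

lemma envelope_le_initial: "envelope (Suc k) \<le> envelope 1"
  using envelope_decseq by (simp add: decseq_def)

lemma residual_tendsto_zero:
  assumes "bdd_below (range f)"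
  shows "(\<lambda>k. xh (Suc k) - x (Suc k)) \<longlonglongrightarrow> 0"
proof -
  define u where "u k = envelope (Suc k)" for k
  have "Inf (range f) \<le> u k" for k
  proof -
    have "Inf (range f) \<le> f (xh (Suc k))"
      using assms by (simp add: cInf_lower)
    also have "\<dots> \<le> u k"
      unfolding u_def by (rule prox_value_le_envelope)
    finally show ?thesis .
  qed
  then obtain L where "u \<longlonglongrightarrow> L"
    using decseq_convergent[OF envelope_decseq] unfolding u_def by blast
  then have "(\<lambda>k. 2 * T / descent_rate * (u k - u (Suc k))) \<longlonglongrightarrow> 2 * T / descent_rate * (L - L)"
    by (intro tendsto_intros LIMSEQ_Suc)
  then have bound_lim: "(\<lambda>k. 2 * T / descent_rate * (u k - u (Suc k))) \<longlonglongrightarrow> 0"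
    by simp
  have bound: "(norm (xh (Suc k) - x (Suc k)))\<^sup>2 \<le> 2 * T / descent_rate * (u k - u (Suc k))" for k
  proof -
    have "(norm (xh (Suc k) - x (Suc k)))\<^sup>2 \<le> 2 * t (Suc k) / descent_rate * (u k - u (Suc k))"
      using envelope_descent[of k] descent_rate_pos step_size_pos[of k]
      unfolding u_def by (simp add: field_simps)
    also have "\<dots> \<le> 2 * T / descent_rate * (u k - u (Suc k))"
      using envelope_decseq descent_rate_pos step_size_bounds(2)[of k]
      unfolding u_def by (intro mult_right_mono divide_right_mono) (auto simp: decseq_Suc_iff)
    finally show ?thesis .
  qed
  have "(\<lambda>k. (norm (xh (Suc k) - x (Suc k)))\<^sup>2) \<longlonglongrightarrow> 0"
    using bound by (intro real_tendsto_sandwich[OF _ _ tendsto_const bound_lim]) simp_all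
  then have "(\<lambda>k. sqrt ((norm (xh (Suc k) - x (Suc k)))\<^sup>2)) \<longlonglongrightarrow> sqrt 0"
    by (intro tendsto_intros)
  then show ?thesis
    by (simp add: tendsto_norm_zero_iff)
qed

lemma prox_subseq_limit:
  assumes cont: "continuous_on UNIV f" and bdd: "bdd_below (range f)"
    and r: "strict_mono r" and lim: "(\<lambda>k. xh (Suc (r k))) \<longlonglongrightarrow> z"
  shows "0 \<in> subdiff f z" "(\<lambda>k. x (Suc (r k))) \<longlonglongrightarrow> z"
proof -
  have res: "(\<lambda>k. xh (Suc (r k)) - x (Suc (r k))) \<longlonglongrightarrow> 0"
    using LIMSEQ_subseq_LIMSEQ[OF residual_tendsto_zero[OF bdd] r] by (simp add: o_def)
  show "0 \<in> subdiff f z"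
    by (rule prox_limit_subdiff_zero[where h = "\<lambda>k. xh (Suc (r k))" and t = "\<lambda>k. t (Suc (r k))"
          and y = "\<lambda>k. x (Suc (r k))"])
      (use cont tau_pos MAD_step(1) step_size_bounds(1) lim res in auto)
  show "(\<lambda>k. x (Suc (r k))) \<longlonglongrightarrow> z"
    using tendsto_diff[OF lim res] by simp
qed

lemma subseq_tendsto_minimizer:
  fixes r :: "nat \<Rightarrow> nat"
  assumes cont: "continuous_on UNIV f" and bdd: "bdd_below (range f)"
    and K: "compact K" "\<And>k. xh (Suc k) \<in> K"
    and crit: "\<forall>z\<in>K. 0 \<in> subdiff f z \<longrightarrow> global_min f z"
    and r: "strict_mono r"
  shows "\<exists>r' z. strict_mono r' \<and> global_min f z \<and> (\<lambda>k. x (Suc (r (r' k)))) \<longlonglongrightarrow> z"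
proof -
  have "\<forall>k. xh (Suc (r k)) \<in> K"
    using K(2) by blast
  then obtain z and r' :: "nat \<Rightarrow> nat" where z: "z \<in> K" "strict_mono r'" "((\<lambda>k. xh (Suc (r k))) \<circ> r') \<longlonglongrightarrow> z"
    by (rule seq_compactE[OF compact_imp_seq_compact[OF K(1)]])
  have "strict_mono (\<lambda>k. r (r' k))"
    using r z(2) by (rule strict_mono_compose)
  moreover have "(\<lambda>k. xh (Suc (r (r' k)))) \<longlonglongrightarrow> z"
    using z(3) by (simp add: o_def)
  ultimately have "0 \<in> subdiff f z" "(\<lambda>k. x (Suc (r (r' k)))) \<longlonglongrightarrow> z"
    by (rule prox_subseq_limit[OF cont bdd])+
  then show ?thesis
    using z(1,2) crit by blast
qed

lemma MAD_minimizing: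
  assumes cont: "continuous_on UNIV f" and bdd: "bdd_below (range f)"
    and K: "compact K" "\<And>k. xh (Suc k) \<in> K"
    and crit: "\<forall>z\<in>K. 0 \<in> subdiff f z \<longrightarrow> global_min f z"
  shows "(\<lambda>k. f (x k)) \<longlonglongrightarrow> Inf (range f)"
    and "\<exists>r z. strict_mono r \<and> global_min f z \<and> (x \<circ> r) \<longlonglongrightarrow> z"
proof -
  note minimizer = subseq_tendsto_minimizer[OF cont bdd K crit]
  have "(\<lambda>k. f (x (Suc k))) \<longlonglongrightarrow> Inf (range f)"
  proof (rule subsubseq_LIMSEQ_imp_LIMSEQ)
    fix r :: "nat \<Rightarrow> nat"
    assume "strict_mono r"
    then obtain r' z where "strict_mono r'" "global_min f z" "(\<lambda>k. x (Suc (r (r' k)))) \<longlonglongrightarrow> z"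
      using minimizer by blast
    moreover from this(3) have "(\<lambda>k. f (x (Suc (r (r' k))))) \<longlonglongrightarrow> f z"
      by (rule continuous_on_tendsto_compose[OF cont]) auto
    ultimately show "\<exists>r'. strict_mono r' \<and> (\<lambda>k. f (x (Suc (r (r' k))))) \<longlonglongrightarrow> Inf (range f)"
      by (auto simp: global_min_Inf)
  qed
  then show "(\<lambda>k. f (x k)) \<longlonglongrightarrow> Inf (range f)"
    by (rule LIMSEQ_imp_Suc)
  obtain r z where "strict_mono r" "global_min f z" "(\<lambda>k. x (Suc (r k))) \<longlonglongrightarrow> z"
    using minimizer[OF strict_mono_id] by auto
  moreover have "strict_mono (\<lambda>k. Suc (r k))"
    using \<open>strict_mono r\<close> by (simp add: strict_mono_Suc_iff)
  ultimately show "\<exists>r z. strict_mono r \<and> global_min f z \<and> (x \<circ> r) \<longlonglongrightarrow> z"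
    by (auto simp: o_def)
qed

end

theorem theorem1:
  fixes f :: "'a::euclidean_space \<Rightarrow> real"
    and \<gamma> \<alpha> \<tau> T \<eta>m \<eta>p \<theta> \<delta> :: real
    and x xh g :: "nat \<Rightarrow> 'a" and t :: "nat \<Rightarrow> real"
  assumes cont: "continuous_on UNIV f"
    and gam: "\<gamma> > 0"
    and cpt: "compact {z. f z \<le> Inf (range f) + \<gamma>}"
    and crit: "\<And>z. f z \<le> Inf (range f) + \<gamma> \<Longrightarrow> 0 \<in> subdiff f z \<Longrightarrow> global_min f z"
    and pos: "\<alpha> > 0" "t 1 > 0" "\<tau> > 0" "T > 0"
    and etam: "0 < \<eta>m" "\<eta>m < 1"
    and etap: "\<eta>p > 1"
    and th: "0 < \<theta>" "\<theta> < 1"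
    and del: "\<delta> > 0"
    and alpha: "1 - sqrt \<eta>m < \<alpha>" "\<alpha> < 1 + sqrt \<eta>m"
    and xstar: "\<exists>xs. global_min f xs \<and> t 1 \<ge> \<tau> \<and> T \<ge> t 1
                   \<and> t 1 \<ge> (norm (xs - x 1))\<^sup>2 / (2 * \<gamma>)"
    and mad: "MAD_seq f \<alpha> \<tau> T \<eta>m \<eta>p \<theta> \<delta> x xh g t"
  shows "(\<lambda>k. f (x k)) \<longlonglongrightarrow> Inf (range f)
         \<and> (\<exists>r z. strict_mono r \<and> global_min f z \<and> (x \<circ> r) \<longlonglongrightarrow> z)"
proof -
  obtain xs where xs: "global_min f xs" "\<tau> \<le> t 1" "t 1 \<le> T"
      "(norm (xs - x 1))\<^sup>2 / (2 * \<gamma>) \<le> t 1"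
    using xstar by blast
  interpret MAD_run f \<alpha> \<tau> T \<eta>m \<eta>p \<theta> \<delta> x xh g t
    using mad pos(3) etam etap xs(2,3) alpha by unfold_locales
  have bdd: "bdd_below (range f)"
    using xs(1) unfolding global_min_def by (auto intro: bdd_belowI)
  have "(norm (xs - x 1))\<^sup>2 / (2 * t 1) \<le> \<gamma>"
    using xs(4) gam pos(2) by (simp add: field_simps)
  then have "envelope 1 \<le> Inf (range f) + \<gamma>"
    using envelope_le_prox_objective[of 0 xs] global_min_Inf[OF xs(1)] by simp
  then have sublevel: "xh (Suc k) \<in> {z. f z \<le> Inf (range f) + \<gamma>}" for k
    using prox_value_le_envelope[of k] envelope_le_initial[of k] by simp
  have "\<forall>z\<in>{z. f z \<le> Inf (range f) + \<gamma>}. 0 \<in> subdiff f z \<longrightarrow> global_min f z"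
    using crit by simp
  note minimizing = MAD_minimizing[OF cont bdd cpt sublevel this]
  show ?thesis
    using minimizing by blast
qed

end
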